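(* Let $\Omega\subset\mathbb{R}^n$ be a domain and let $\mathcal{X}(\Omega)$ be a normed space of measurable functions on $\Omega$ satisfying properties (i) and (ii) below. Let $f\in\mathcal{X}(\Omega)$ and put $$\mu(\rho)=\sup_{x\in\Omega}\|f\|_{\mathcal{X},B_\rho(x)\cap\Omega}.$$ Then $\mu(\rho)\to0$ as $\rho\to0$.
   Context: For $\Omega_1\subset\Omega$ one sets $\|f\|_{\mathcal{X},\Omega_1}=\|f\chi_{\Omega_1}\|_{\mathcal{X},\Omega}$, where $\chi_{\Omega_1}$ is the characteristic function of $\Omega_1$. Properties of $\mathcal{X}(\Omega)$: - (i) If $g$ is measurable, $f\in\mathcal{X}(\Omega)$ and $|g|\le|f|$, then $g\in\mathcal{X}(\Omega)$ and $\|g\|_{\mathcal{X},\Omega}\le\|f\|_{\mathcal{X},\Omega}$. - (ii) If $f_k\in\mathcal{X}(\Omega)$ and $f_k\searrow0$ a.e., then $\|f_k\|_{\mathcal{X},\Omega}\to0$. *)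

theory Defs
  imports "HOL-Analysis.Analysis"
begin

text \<open>Functions on \<Omega> are represented as total functions 'a \<Rightarrow> real; only their
values on \<Omega> are relevant.  X is the carrier (a set of functions), N the norm.\<close>

definition restr_norm :: "(('a \<Rightarrow> real) \<Rightarrow> real) \<Rightarrow> 'a set \<Rightarrow> ('a \<Rightarrow> real) \<Rightarrow> real" where
  "restr_norm N \<Omega>1 f = N (\<lambda>y. f y * indicator \<Omega>1 y)"

text \<open>X is a normed space of (Lebesgue) measurable functions on \<Omega>,
  functions being identified when equal a.e. on \<Omega>.\<close>
definition meas_normed_space ::
  "'a::euclidean_space set \<Rightarrow> ('a \<Rightarrow> real) set \<Rightarrow> (('a \<Rightarrow> real) \<Rightarrow> real) \<Rightarrow> bool" where
  "meas_normed_space \<Omega> X N \<longleftrightarrow>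
     X \<subseteq> borel_measurable (lebesgue_on \<Omega>) \<and>
     (\<lambda>x. 0) \<in> X \<and>
     (\<forall>f\<in>X. \<forall>g\<in>X. (\<lambda>x. f x + g x) \<in> X) \<and>
     (\<forall>f\<in>X. \<forall>c. (\<lambda>x. c * f x) \<in> X) \<and>
     (\<forall>f\<in>X. N f \<ge> 0) \<and>
     (\<forall>f\<in>X. N f = 0 \<longleftrightarrow> (AE x in lebesgue_on \<Omega>. f x = 0)) \<and>
     (\<forall>f\<in>X. \<forall>g\<in>X. N (\<lambda>x. f x + g x) \<le> N f + N g) \<and>
     (\<forall>f\<in>X. \<forall>c. N (\<lambda>x. c * f x) = \<bar>c\<bar> * N f)"

definition prop_i ::
  "'a::euclidean_space set \<Rightarrow> ('a \<Rightarrow> real) set \<Rightarrow> (('a \<Rightarrow> real) \<Rightarrow> real) \<Rightarrow> bool" where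
  "prop_i \<Omega> X N \<longleftrightarrow>
     (\<forall>f g. g \<in> borel_measurable (lebesgue_on \<Omega>) \<and> f \<in> X \<and> (\<forall>x\<in>\<Omega>. \<bar>g x\<bar> \<le> \<bar>f x\<bar>)
        \<longrightarrow> g \<in> X \<and> N g \<le> N f)"

definition prop_ii ::
  "'a::euclidean_space set \<Rightarrow> ('a \<Rightarrow> real) set \<Rightarrow> (('a \<Rightarrow> real) \<Rightarrow> real) \<Rightarrow> bool" where
  "prop_ii \<Omega> X N \<longleftrightarrow>
     (\<forall>F :: nat \<Rightarrow> 'a \<Rightarrow> real. (\<forall>k. F k \<in> X) \<and>
        (AE x in lebesgue_on \<Omega>. decseq (\<lambda>k. F k x) \<and> (\<lambda>k. F k x) \<longlonglongrightarrow> 0)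
        \<longrightarrow> (\<lambda>k. N (F k)) \<longlonglongrightarrow> 0)"

end

theory Submission imports Defs "HOL-Analysis.Analysis" begin

text \<open>Suppose the restrictions of f to small balls did not become uniformly small: then there are
  balls A n of measure less than 2^-n on which the norm of f exceeds a fixed \<epsilon> > 0. By
  Borel--Cantelli almost every point lies in only finitely many A n, so the functions |f| times
  the indicator of the tail \<Union>j\<ge>k. A j decrease to 0 almost everywhere. Property (ii) forces
  their norms to 0, whereas by property (i) each of them dominates the norm of f on A k, which
  exceeds \<epsilon>.\<close>

lemma measure_ball_tendsto_0:
  "((\<lambda>r. measure lborel (ball (c::'a::euclidean_space) r)) \<longlongrightarrow> 0) (at_right 0)"
proof -
  have "((\<lambda>r. unit_ball_vol DIM('a) * r ^ DIM('a)) \<longlongrightarrow> unit_ball_vol DIM('a) * 0 ^ DIM('a))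
      (at_right 0)"
    by (intro tendsto_intros)
  then have "((\<lambda>r. unit_ball_vol DIM('a) * r ^ DIM('a)) \<longlongrightarrow> 0) (at_right 0)"
    by (simp add: power_0_left)
  moreover have "eventually (\<lambda>r. unit_ball_vol DIM('a) * r ^ DIM('a) =
      measure lborel (ball c r)) (at_right (0::real))"
    by (auto simp: eventually_at_right_field measure_def emeasure_ball intro: exI[of _ 1])
  ultimately show ?thesis
    by (rule Lim_transform_eventually)
qed

lemma meas_normed_space_borel_measurable:
  "meas_normed_space \<Omega> X N \<Longrightarrow> f \<in> X \<Longrightarrow> f \<in> borel_measurable (lebesgue_on \<Omega>)"
  by (auto simp: meas_normed_space_def)

lemma meas_normed_space_norm_nonneg:
  "meas_normed_space \<Omega> X N \<Longrightarrow> f \<in> X \<Longrightarrow> 0 \<le> N f"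
  by (auto simp: meas_normed_space_def)

lemma restrict_borel_measurable_lebesgue_on:
  assumes "f \<in> borel_measurable (lebesgue_on \<Omega>)" and "A \<in> sets lebesgue"
  shows "(\<lambda>y. f y * indicator A y :: real) \<in> borel_measurable (lebesgue_on \<Omega>)"
proof -
  have "(indicator A :: 'a \<Rightarrow> real) \<in> borel_measurable (lebesgue_on \<Omega>)"
    using assms(2) by (intro measurable_restrict_space1) simp
  then show ?thesis
    using assms(1) by (intro borel_measurable_times)
qed

lemma prop_i_restrict:
  assumes "prop_i \<Omega> X N" and "h \<in> X" and "f \<in> borel_measurable (lebesgue_on \<Omega>)"
    and "A \<in> sets lebesgue" and "\<And>x. x \<in> \<Omega> \<Longrightarrow> x \<in> A \<Longrightarrow> \<bar>f x\<bar> \<le> \<bar>h x\<bar>"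
  shows "(\<lambda>y. f y * indicator A y) \<in> X \<and> N (\<lambda>y. f y * indicator A y) \<le> N h"
proof -
  have "\<forall>x\<in>\<Omega>. \<bar>f x * indicator A x\<bar> \<le> \<bar>h x\<bar>"
    using assms(5) by (simp add: indicator_def)
  then show ?thesis
    using assms(1-4) restrict_borel_measurable_lebesgue_on[OF assms(3,4)]
    unfolding prop_i_def by blast
qed

lemma prop_ii_tail_unions:
  fixes A :: "nat \<Rightarrow> 'a::euclidean_space set"
  assumes "meas_normed_space \<Omega> X N" and "prop_i \<Omega> X N" and "prop_ii \<Omega> X N" and "f \<in> X"
    and "\<Omega> \<in> sets lebesgue" and "\<And>n. A n \<in> sets borel"
    and "\<And>n. emeasure lborel (A n) < \<infinity>" and "summable (\<lambda>n. measure lborel (A n))"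
  shows "(\<lambda>k. N (\<lambda>y. \<bar>f y\<bar> * indicator (\<Union>j\<in>{k..}. A j) y)) \<longlonglongrightarrow> 0"
proof -
  define F where "F k = (\<lambda>y. \<bar>f y\<bar> * indicator (\<Union>j\<in>{k..}. A j) y)" for k
  have f_meas: "f \<in> borel_measurable (lebesgue_on \<Omega>)"
    using assms(1,4) by (rule meas_normed_space_borel_measurable)
  have "(\<Union>j\<in>{k..}. A j) \<in> sets borel" for k
    using assms(6) by (intro sets.countable_UN') auto
  then have F_in: "F k \<in> X" for k
    unfolding F_def
    by (intro conjunct1[OF prop_i_restrict[OF assms(2,4) borel_measurable_abs[OF f_meas]]]) auto
  have "AE y in lborel. eventually (\<lambda>n. y \<in> space lborel - A n) sequentially"
    using assms(6-8) by (intro borel_cantelli_AE1) auto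
  then have "AE y in lebesgue. eventually (\<lambda>n. y \<notin> A n) sequentially"
    by (intro AE_completion) auto
  then have "AE y in lebesgue_on \<Omega>. eventually (\<lambda>n. y \<notin> A n) sequentially"
    using assms(5) by (subst AE_restrict_space_iff) auto
  then have "AE y in lebesgue_on \<Omega>. decseq (\<lambda>k. F k y) \<and> (\<lambda>k. F k y) \<longlonglongrightarrow> 0"
  proof eventually_elim
    case (elim y)
    then obtain K where "\<And>n. n \<ge> K \<Longrightarrow> y \<notin> A n"
      unfolding eventually_sequentially by auto
    then have "eventually (\<lambda>k. F k y = 0) sequentially"
      unfolding eventually_sequentially F_def by (intro exI[of _ K]) auto
    moreover have "decseq (\<lambda>k. F k y)"
      unfolding decseq_def F_def by (auto simp: indicator_def)
    ultimately show ?case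
      by (simp add: tendsto_eventually)
  qed
  with F_in have "(\<lambda>k. N (F k)) \<longlonglongrightarrow> 0"
    using assms(3) unfolding prop_ii_def by simp
  then show ?thesis
    by (simp add: F_def)
qed

lemma restr_norm_balls_uniformly_small:
  fixes \<Omega> :: "'a::euclidean_space set"
  assumes "meas_normed_space \<Omega> X N" and "prop_i \<Omega> X N" and "prop_ii \<Omega> X N" and "f \<in> X"
    and "\<Omega> \<in> sets lebesgue" and "\<epsilon> > 0"
  shows "eventually (\<lambda>\<rho>. \<forall>x\<in>\<Omega>. restr_norm N (ball x \<rho> \<inter> \<Omega>) f \<le> \<epsilon>) (at_right 0)"
proof (rule ccontr)
  assume "\<not> ?thesis"
  then have large: "frequently (\<lambda>\<rho>. \<exists>x\<in>\<Omega>. restr_norm N (ball x \<rho> \<inter> \<Omega>) f > \<epsilon>) (at_right 0)"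
    by (simp add: not_eventually not_le)
  have "\<exists>\<rho> x. restr_norm N (ball x \<rho> \<inter> \<Omega>) f > \<epsilon> \<and> measure lborel (ball x \<rho>) < (1/2) ^ n"
    for n
  proof -
    have "eventually (\<lambda>\<rho>. measure lborel (ball (0::'a) \<rho>) < (1/2) ^ n) (at_right 0)"
      using measure_ball_tendsto_0 by (rule order_tendstoD) simp
    then have "eventually (\<lambda>\<rho>. \<rho> > 0 \<and> measure lborel (ball (0::'a) \<rho>) < (1/2) ^ n)
        (at_right 0)"
      by (simp add: eventually_conj_iff eventually_at_right_less)
    from frequently_eventually_conj[OF large this] obtain \<rho> x where "\<rho> > 0"
      "restr_norm N (ball x \<rho> \<inter> \<Omega>) f > \<epsilon>" "measure lborel (ball (0::'a) \<rho>) < (1/2) ^ n"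
      by (auto dest: frequently_ex)
    moreover have "measure lborel (ball x \<rho>) = measure lborel (ball (0::'a) \<rho>)"
      using \<open>\<rho> > 0\<close> by (simp add: measure_def emeasure_ball)
    ultimately show ?thesis
      by (intro exI[of _ \<rho>] exI[of _ x]) simp
  qed
  then obtain \<rho> x where large_n: "\<And>n. restr_norm N (ball (x n) (\<rho> n) \<inter> \<Omega>) f > \<epsilon>" and
    small_n: "\<And>n. measure lborel (ball (x n) (\<rho> n)) < (1/2) ^ n"
    by metis
  define A where "A n = ball (x n) (\<rho> n)" for n
  define T where "T k = (\<lambda>y. \<bar>f y\<bar> * indicator (\<Union>j\<in>{k..}. A j) y)" for k
  have A_borel: "A n \<in> sets borel" and A_finite: "emeasure lborel (A n) < \<infinity>" for n
    unfolding A_def by (simp, rule emeasure_lborel_ball_finite)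
  have "summable (\<lambda>n. measure lborel (A n))"
    by (rule summable_comparison_test[of _ "\<lambda>n. (1/2::real) ^ n"])
      (use small_n less_imp_le in \<open>auto simp: A_def\<close>)
  then have "(\<lambda>k. N (T k)) \<longlonglongrightarrow> 0"
    unfolding T_def by (rule prop_ii_tail_unions[OF assms(1-5) A_borel A_finite])
  then have "eventually (\<lambda>k. N (T k) < \<epsilon>) sequentially"
    using assms(6) by (rule order_tendstoD)
  then obtain k where "N (T k) < \<epsilon>"
    using eventually_happens'[OF sequentially_bot] by blast
  moreover have "restr_norm N (A k \<inter> \<Omega>) f \<le> N (T k)"
  proof -
    have f_meas: "f \<in> borel_measurable (lebesgue_on \<Omega>)"
      using assms(1,4) by (rule meas_normed_space_borel_measurable)
    have "T k \<in> X"
      unfolding T_def using A_borel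
      by (intro conjunct1[OF prop_i_restrict[OF assms(2,4) borel_measurable_abs[OF f_meas]]]) auto
    then show ?thesis
      unfolding restr_norm_def using A_borel assms(5)
      by (intro conjunct2[OF prop_i_restrict[OF assms(2) _ f_meas]]) (auto simp: T_def indicator_def)
  qed
  ultimately show False
    using large_n[of k] by (simp add: A_def)
qed

theorem lemma2p3:
  fixes \<Omega> :: "'a::euclidean_space set"
    and X :: "('a \<Rightarrow> real) set"
    and N :: "('a \<Rightarrow> real) \<Rightarrow> real"
    and f :: "'a \<Rightarrow> real"
  assumes "open \<Omega>" and "connected \<Omega>" and "\<Omega> \<noteq> {}"
    and "meas_normed_space \<Omega> X N"
    and "prop_i \<Omega> X N"
    and "prop_ii \<Omega> X N"
    and "f \<in> X"
  shows "((\<lambda>\<rho>. SUP x\<in>\<Omega>. restr_norm N (ball x \<rho> \<inter> \<Omega>) f) \<longlongrightarrow> 0) (at_right 0)"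
proof -
  let ?\<mu> = "\<lambda>\<rho>. SUP x\<in>\<Omega>. restr_norm N (ball x \<rho> \<inter> \<Omega>) f"
  have \<Omega>_meas: "\<Omega> \<in> sets lebesgue"
    using assms(1) by simp
  have f_meas: "f \<in> borel_measurable (lebesgue_on \<Omega>)"
    using assms(4,7) by (rule meas_normed_space_borel_measurable)
  have restr_bounds: "0 \<le> restr_norm N (ball x \<rho> \<inter> \<Omega>) f \<and> restr_norm N (ball x \<rho> \<inter> \<Omega>) f \<le> N f"
    for x \<rho>
  proof -
    have "(\<lambda>y. f y * indicator (ball x \<rho> \<inter> \<Omega>) y) \<in> X \<and>
        N (\<lambda>y. f y * indicator (ball x \<rho> \<inter> \<Omega>) y) \<le> N f"
      by (rule prop_i_restrict[OF assms(5,7) f_meas]) (use \<Omega>_meas in auto)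
    then show ?thesis
      using meas_normed_space_norm_nonneg[OF assms(4)] unfolding restr_norm_def by blast
  qed
  obtain x0 where "x0 \<in> \<Omega>"
    using assms(3) by auto
  then have \<mu>_nonneg: "0 \<le> ?\<mu> \<rho>" for \<rho>
    using restr_bounds by (intro cSUP_upper2[where x = x0] bdd_aboveI2[where M = "N f"]) auto
  have \<mu>_small: "eventually (\<lambda>\<rho>. ?\<mu> \<rho> \<le> \<epsilon>) (at_right 0)" if "\<epsilon> > 0" for \<epsilon>
    using restr_norm_balls_uniformly_small[OF assms(4-7) \<Omega>_meas that]
    by eventually_elim (use assms(3) in \<open>auto intro: cSUP_least\<close>)
  show ?thesis
  proof (rule order_tendstoI)
    fix a :: real
    assume "a < 0"
    with \<mu>_nonneg show "eventually (\<lambda>\<rho>. a < ?\<mu> \<rho>) (at_right 0)"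
      by (auto intro: always_eventually less_le_trans)
  next
    fix a :: real
    assume "0 < a"
    then show "eventually (\<lambda>\<rho>. ?\<mu> \<rho> < a) (at_right 0)"
      using \<mu>_small[of "a / 2"] by (auto elim: eventually_mono)
  qed
qed

end
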